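(* For every $i\in\{0,1,2\}$, $\mathcal{Z}_2\equiv_{\mathrm{m}}\mathrm{Clo}(d_i)$.
   Context: On $\{0,1,2\}$, define $d_i(x,y,z)=\mathrm{min}(x,y,z)$ if $|\{x,y,z\}|\leq2$ and $d_i(x,y,z)=i$ if $|\{x,y,z\}|=3$, where $\mathrm{min}$ is the minority operation ($\mathrm{min}(x,y,y)=\mathrm{min}(y,x,y)=\mathrm{min}(y,y,x)=x$, and $\mathrm{min}(x,x,x)=x$). $\mathrm{Clo}(d_i)$ is the clone generated by $d_i$. $\mathcal{Z}_2=\mathrm{Pol}(\{0,1\};\{(x,y,z,x-y+z\bmod2)\},\{0\},\{1\})$ is the clone of idempotent affine operations modulo 2 on $\{0,1\}$. For an $n$-ary $f$ and $\sigma\colon[n]\to[r]$, $f_\sigma(x_1,\dots,x_r)=f(x_{\sigma(1)},\dots,x_{\sigma(n)})$; a minion homomorphism is an arity-preserving map $\xi$ between clones with $\xi(f_\sigma)=\xi(f)_\sigma$; $\equiv_{\mathrm{m}}$ means minion homomorphisms exist in both directions. *)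

theory Defs
  imports Main
begin

text \<open>Finitary operations on a carrier A (a set of naturals) are represented as pairs
  (n, f) with n the arity and f :: nat list \<Rightarrow> nat; f is canonicalised to be
  undefined outside A^n (tuples = lists of length n with entries in A).\<close>

type_synonym op = "nat \<times> (nat list \<Rightarrow> nat)"

definition ops :: "nat set \<Rightarrow> op set" where
  "ops A = {(n, f). \<forall>xs. (length xs = n \<and> set xs \<subseteq> A \<longrightarrow> f xs \<in> A)
                        \<and> (\<not> (length xs = n \<and> set xs \<subseteq> A) \<longrightarrow> f xs = undefined)}"

definition mk_op :: "nat set \<Rightarrow> nat \<Rightarrow> (nat list \<Rightarrow> nat) \<Rightarrow> op" where
  "mk_op A n g = (n, \<lambda>xs. if length xs = n \<and> set xs \<subseteq> A then g xs else undefined)"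

definition proj :: "nat set \<Rightarrow> nat \<Rightarrow> nat \<Rightarrow> op" where
  "proj A n k = mk_op A n (\<lambda>xs. xs ! k)"

definition compose :: "nat set \<Rightarrow> nat \<Rightarrow> op \<Rightarrow> op list \<Rightarrow> op" where
  "compose A m f gs = mk_op A m (\<lambda>xs. snd f (map (\<lambda>g. snd g xs) gs))"

inductive_set clo :: "nat set \<Rightarrow> op set \<Rightarrow> op set" for A F where
  clo_proj: "k < n \<Longrightarrow> proj A n k \<in> clo A F"
| clo_gen: "f \<in> F \<Longrightarrow> f \<in> clo A F"
| clo_comp: "\<lbrakk> f \<in> clo A F; fst f = length gs; \<forall>g\<in>set gs. g \<in> clo A F \<and> fst g = m \<rbrakk>
             \<Longrightarrow> compose A m f gs \<in> clo A F"

text \<open>Relations: (arity k, set of k-tuples).\<close>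
type_synonym rel = "nat \<times> nat list set"

definition preserves :: "op \<Rightarrow> rel \<Rightarrow> bool" where
  "preserves f R \<longleftrightarrow> (\<forall>rows. length rows = fst f \<and> set rows \<subseteq> snd R \<longrightarrow>
       map (\<lambda>j. snd f (map (\<lambda>r. r ! j) rows)) [0..<fst R] \<in> snd R)"

definition Pol :: "nat set \<Rightarrow> rel set \<Rightarrow> op set" where
  "Pol B Rs = {f \<in> ops B. \<forall>R\<in>Rs. preserves f R}"

definition affine_rel :: rel where
  "affine_rel = (4, {[x, y, z, nat ((int x - int y + int z) mod 2)] | x y z.
                        x \<in> {0,1} \<and> y \<in> {0,1} \<and> z \<in> {0,1}})"

definition Z2 :: "op set" where
  "Z2 = Pol {0,1} {affine_rel, (1, {[0]}), (1, {[1]})}"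

definition d :: "nat \<Rightarrow> op" where
  "d i = mk_op {0,1,2} 3 (\<lambda>xs. let x = xs ! 0; y = xs ! 1; z = xs ! 2 in
      if card {x, y, z} \<le> 2 then
        (if y = z then x else if x = z then y else z)
      else i)"

text \<open>Minor f_sigma, sigma : [n] \<rightarrow> [r] (0-indexed).\<close>
definition minor :: "nat set \<Rightarrow> op \<Rightarrow> nat \<Rightarrow> (nat \<Rightarrow> nat) \<Rightarrow> op" where
  "minor A f r \<sigma> = mk_op A r (\<lambda>xs. snd f (map (\<lambda>i. xs ! (\<sigma> i)) [0..<fst f]))"

definition minion_hom :: "nat set \<Rightarrow> op set \<Rightarrow> nat set \<Rightarrow> op set \<Rightarrow> (op \<Rightarrow> op) \<Rightarrow> bool" where
  "minion_hom A C B D \<xi> \<longleftrightarrow>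
     (\<forall>f\<in>C. \<xi> f \<in> D \<and> fst (\<xi> f) = fst f) \<and>
     (\<forall>f\<in>C. \<forall>r \<sigma>. (\<forall>i<fst f. \<sigma> i < r) \<longrightarrow> \<xi> (minor A f r \<sigma>) = minor B (\<xi> f) r \<sigma>)"

definition minion_equiv :: "nat set \<Rightarrow> op set \<Rightarrow> nat set \<Rightarrow> op set \<Rightarrow> bool" where
  "minion_equiv A C B D \<longleftrightarrow> (\<exists>\<xi>. minion_hom A C B D \<xi>) \<and> (\<exists>\<xi>. minion_hom B D A C \<xi>)"

end

theory Submission
  imports Defs
begin

text \<open>
  Restriction to {0, 1} is a minion homomorphism from Clo(d_i) to Z2: the generator d_i restricts
  to the minority operation x + y + z mod 2, which is idempotent and affine, and the operations
  preserving a set of relations form a clone.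

  Conversely, every f in Z2 is the sum mod 2 of its arguments x_j for j in a set S of odd size
  (its support, read off from the values of f on unit vectors). Send f to the operation of
  Clo(d_i) that returns the unique value occurring an odd number of times among the x_j with
  j in S, and i if all three values do. A minor merges coordinates of S, which leaves these
  parities unchanged, so this map commutes with minors. That these parity votes lie in Clo(d_i)
  is shown by induction on the odd number k of arguments: the vote on k + 2 arguments is d_i
  applied to the vote on the first k arguments and to two auxiliary operations, which apply a
  fixed transposition to their last argument when all three parities of the first k arguments are
  odd; the auxiliary operations satisfy a recursion of the same kind.
\<close>

abbreviation D2 :: "nat set" where "D2 \<equiv> {0, 1}"
abbreviation D3 :: "nat set" where "D3 \<equiv> {0, 1, 2}"

lemma fst_mk_op [simp]: "fst (mk_op A n g) = n"
  by (simp add: mk_op_def)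

lemma fst_proj [simp]: "fst (proj A n k) = n"
  by (simp add: proj_def)

lemma fst_compose [simp]: "fst (compose A m f gs) = m"
  by (simp add: compose_def)

lemma fst_minor [simp]: "fst (minor A f r \<sigma>) = r"
  by (simp add: minor_def)

lemma fst_d [simp]: "fst (d i) = 3"
  by (simp add: d_def)

lemma snd_mk_op: "length xs = n \<Longrightarrow> set xs \<subseteq> A \<Longrightarrow> snd (mk_op A n g) xs = g xs"
  by (simp add: mk_op_def)

lemma mk_op_cong:
  "(\<And>xs. length xs = n \<Longrightarrow> set xs \<subseteq> A \<Longrightarrow> g xs = h xs) \<Longrightarrow> mk_op A n g = mk_op A n h"
  by (auto simp: mk_op_def)

lemma mk_op_in_ops:
  "(\<And>xs. length xs = n \<Longrightarrow> set xs \<subseteq> A \<Longrightarrow> g xs \<in> A) \<Longrightarrow> mk_op A n g \<in> ops A"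
  by (auto simp: ops_def mk_op_def)

lemma ops_value: "f \<in> ops A \<Longrightarrow> length xs = fst f \<Longrightarrow> set xs \<subseteq> A \<Longrightarrow> snd f xs \<in> A"
  by (cases f) (auto simp: ops_def)

lemma nth_mem_subset: "set xs \<subseteq> A \<Longrightarrow> j < length xs \<Longrightarrow> xs ! j \<in> A"
  by (meson nth_mem subsetD)

lemma set_map_nth_subset:
  "set xs \<subseteq> A \<Longrightarrow> \<forall>j\<in>set js. j < length xs \<Longrightarrow> set (map ((!) xs) js) \<subseteq> A"
  by (auto intro: nth_mem)

lemma clo_subset_ops:
  assumes "F \<subseteq> ops A"
  shows "clo A F \<subseteq> ops A"
proof
  fix f assume "f \<in> clo A F"
  then show "f \<in> ops A"
  proof (induction rule: clo.induct)
    case (clo_proj k n)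
    then show ?case
      unfolding proj_def by (intro mk_op_in_ops) auto
  next
    case (clo_comp f gs m)
    show ?case
      unfolding compose_def
    proof (rule mk_op_in_ops)
      fix xs assume "length xs = m" "set xs \<subseteq> A"
      then have "set (map (\<lambda>g. snd g xs) gs) \<subseteq> A"
        using clo_comp.IH by (metis (no_types, lifting) image_subset_iff list.set_map ops_value)
      then show "snd f (map (\<lambda>g. snd g xs) gs) \<in> A"
        using clo_comp by (intro ops_value) auto
    qed
  qed (use assms in auto)
qed

lemma clo_mk_op_compose:
  assumes "f \<in> clo A F" "fst f = length Gs" "\<forall>G\<in>set Gs. mk_op A m G \<in> clo A F"
  shows "mk_op A m (\<lambda>xs. snd f (map (\<lambda>G. G xs) Gs)) \<in> clo A F"
proof -
  have "compose A m f (map (mk_op A m) Gs) \<in> clo A F"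
    using assms by (intro clo_comp) auto
  moreover have "compose A m f (map (mk_op A m) Gs) = mk_op A m (\<lambda>xs. snd f (map (\<lambda>G. G xs) Gs))"
    unfolding compose_def by (rule mk_op_cong) (simp add: snd_mk_op comp_def)
  ultimately show ?thesis by simp
qed

lemma clo_mk_op_reindex:
  assumes "mk_op A k G \<in> clo A F" "length js = k" "\<forall>j\<in>set js. j < m"
  shows "mk_op A m (\<lambda>xs. G (map ((!) xs) js)) \<in> clo A F"
proof -
  have "mk_op A m (\<lambda>xs. snd (mk_op A k G) (map (\<lambda>H. H xs) (map (\<lambda>j xs. xs ! j) js))) \<in> clo A F"
    using assms by (intro clo_mk_op_compose) (auto simp: proj_def[symmetric] intro: clo_proj)
  moreover have "mk_op A m (\<lambda>xs. snd (mk_op A k G) (map (\<lambda>H. H xs) (map (\<lambda>j xs. xs ! j) js)))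
                 = mk_op A m (\<lambda>xs. G (map ((!) xs) js))"
  proof (rule mk_op_cong)
    fix xs :: "nat list" assume "length xs = m" "set xs \<subseteq> A"
    then have "set (map ((!) xs) js) \<subseteq> A"
      using assms(3) by (intro set_map_nth_subset) auto
    then show "snd (mk_op A k G) (map (\<lambda>H. H xs) (map (\<lambda>j xs. xs ! j) js)) = G (map ((!) xs) js)"
      using assms(2) by (simp add: snd_mk_op comp_def)
  qed
  ultimately show ?thesis by simp
qed

section \<open>Polymorphism clones and restriction\<close>

definition rel_over :: "nat set \<Rightarrow> rel \<Rightarrow> bool" where
  "rel_over B R \<longleftrightarrow> (\<forall>t\<in>snd R. length t = fst R \<and> set t \<subseteq> B)"

lemma column_subset:
  assumes "rel_over B R" "set rows \<subseteq> snd R" "j < fst R"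
  shows "set (map (\<lambda>r. r ! j) rows) \<subseteq> B"
proof -
  have "r ! j \<in> B" if "r \<in> set rows" for r
  proof -
    have "length r = fst R" "set r \<subseteq> B"
      using assms(1,2) that by (auto simp: rel_over_def)
    then show ?thesis
      using assms(3) nth_mem[of j r] by auto
  qed
  then show ?thesis by auto
qed

lemma Pol_proj:
  assumes "k < n" "\<forall>R\<in>Rs. rel_over B R"
  shows "proj B n k \<in> Pol B Rs"
  unfolding Pol_def
proof (intro CollectI conjI ballI)
  show "proj B n k \<in> ops B"
    unfolding proj_def using assms(1) by (intro mk_op_in_ops) auto
next
  fix R assume R: "R \<in> Rs"
  show "preserves (proj B n k) R"
    unfolding preserves_def
  proof (intro allI impI)
    fix rows assume rows: "length rows = fst (proj B n k) \<and> set rows \<subseteq> snd R"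
    have "rows ! k \<in> snd R"
      using rows assms(1) by auto
    moreover have "map (\<lambda>j. snd (proj B n k) (map (\<lambda>r. r ! j) rows)) [0..<fst R] = rows ! k"
    proof (rule nth_equalityI)
      fix j assume "j < length (map (\<lambda>j. snd (proj B n k) (map (\<lambda>r. r ! j) rows)) [0..<fst R])"
      then have "j < fst R" by simp
      then show "map (\<lambda>j. snd (proj B n k) (map (\<lambda>r. r ! j) rows)) [0..<fst R] ! j = rows ! k ! j"
        using rows assms column_subset[OF _ _ \<open>j < fst R\<close>, of B rows] R
        by (simp add: proj_def snd_mk_op)
    qed (use \<open>rows ! k \<in> snd R\<close> assms(2) R in \<open>auto simp: rel_over_def\<close>)
    ultimately show "map (\<lambda>j. snd (proj B n k) (map (\<lambda>r. r ! j) rows)) [0..<fst R] \<in> snd R"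
      by simp
  qed
qed

lemma Pol_compose:
  assumes f: "f \<in> Pol B Rs" "fst f = length gs"
    and gs: "\<forall>g\<in>set gs. g \<in> Pol B Rs \<and> fst g = m"
    and Rs: "\<forall>R\<in>Rs. rel_over B R"
  shows "compose B m f gs \<in> Pol B Rs"
  unfolding Pol_def
proof (intro CollectI conjI ballI)
  have gs_value: "snd g xs \<in> B" if "g \<in> set gs" "length xs = m" "set xs \<subseteq> B" for g xs
    using gs that by (intro ops_value) (auto simp: Pol_def)
  show "compose B m f gs \<in> ops B"
    unfolding compose_def
  proof (rule mk_op_in_ops)
    fix xs assume "length xs = m" "set xs \<subseteq> B"
    then show "snd f (map (\<lambda>g. snd g xs) gs) \<in> B"
      using f gs_value by (intro ops_value) (auto simp: Pol_def)
  qed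
next
  fix R assume R: "R \<in> Rs"
  show "preserves (compose B m f gs) R"
    unfolding preserves_def
  proof (intro allI impI)
    fix rows assume rows: "length rows = fst (compose B m f gs) \<and> set rows \<subseteq> snd R"
    define col where "col j = map (\<lambda>r. r ! j) rows" for j
    define rows' where "rows' = map (\<lambda>g. map (\<lambda>j. snd g (col j)) [0..<fst R]) gs"
    have "set rows' \<subseteq> snd R"
      using gs rows R unfolding rows'_def col_def by (auto simp: Pol_def preserves_def)
    moreover have "length rows' = fst f"
      using f(2) by (simp add: rows'_def)
    ultimately have "map (\<lambda>j. snd f (map (\<lambda>r. r ! j) rows')) [0..<fst R] \<in> snd R"
      using f(1) R unfolding Pol_def preserves_def by blast
    moreover have "snd (compose B m f gs) (col j) = snd f (map (\<lambda>r. r ! j) rows')"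
      if "j < fst R" for j
      using rows that column_subset[OF _ _ that, of B rows] Rs R
      by (simp add: compose_def snd_mk_op col_def rows'_def comp_def)
    then have "map (\<lambda>j. snd (compose B m f gs) (col j)) [0..<fst R]
             = map (\<lambda>j. snd f (map (\<lambda>r. r ! j) rows')) [0..<fst R]"
      by (intro map_cong) auto
    ultimately show "map (\<lambda>j. snd (compose B m f gs) (map (\<lambda>r. r ! j) rows)) [0..<fst R] \<in> snd R"
      unfolding col_def by metis
  qed
qed

definition restrict_op :: "nat set \<Rightarrow> op \<Rightarrow> op" where
  "restrict_op B f = mk_op B (fst f) (snd f)"

lemma fst_restrict_op [simp]: "fst (restrict_op B f) = fst f"
  by (simp add: restrict_op_def)

lemma restrict_op_proj: "B \<subseteq> A \<Longrightarrow> restrict_op B (proj A n k) = proj B n k"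
  unfolding restrict_op_def proj_def fst_mk_op by (intro mk_op_cong) (auto simp: snd_mk_op)

lemma restrict_op_compose:
  assumes "B \<subseteq> A" "fst f = length gs" "\<forall>g\<in>set gs. fst g = m \<and> restrict_op B g \<in> ops B"
  shows "restrict_op B (compose A m f gs) = compose B m (restrict_op B f) (map (restrict_op B) gs)"
  unfolding restrict_op_def compose_def fst_mk_op
proof (rule mk_op_cong)
  fix xs assume xs: "length xs = m" "set xs \<subseteq> B"
  have restrict_gs: "map (\<lambda>g. snd (mk_op B (fst g) (snd g)) xs) gs = map (\<lambda>g. snd g xs) gs"
    using assms(3) xs by (intro map_cong) (auto simp: snd_mk_op)
  have "snd g xs \<in> B" if "g \<in> set gs" for g
    using ops_value[of "restrict_op B g" B xs] assms(3) that xs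
    by (auto simp: restrict_op_def snd_mk_op)
  then have "set (map (\<lambda>g. snd g xs) gs) \<subseteq> B"
    by auto
  then show "snd (mk_op A m (\<lambda>xs. snd f (map (\<lambda>g. snd g xs) gs))) xs
           = snd (mk_op B (fst f) (snd f)) (map (\<lambda>g. snd g xs) (map (\<lambda>g. mk_op B (fst g) (snd g)) gs))"
    using assms(1,2) xs by (simp add: snd_mk_op comp_def restrict_gs subset_trans)
qed

lemma restrict_op_minor:
  assumes "B \<subseteq> A" "\<forall>j<fst f. \<sigma> j < r"
  shows "restrict_op B (minor A f r \<sigma>) = minor B (restrict_op B f) r \<sigma>"
  unfolding restrict_op_def minor_def fst_mk_op
proof (rule mk_op_cong)
  fix xs assume xs: "length xs = r" "set xs \<subseteq> B"
  then have "set (map (\<lambda>j. xs ! \<sigma> j) [0..<fst f]) \<subseteq> B"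
    using assms(2) by (auto intro: nth_mem)
  then show "snd (mk_op A r (\<lambda>xs. snd f (map (\<lambda>i. xs ! \<sigma> i) [0..<fst f]))) xs
           = snd (mk_op B (fst f) (snd f)) (map (\<lambda>i. xs ! \<sigma> i) [0..<fst f])"
    using assms(1) xs by (auto simp: snd_mk_op)
qed

lemma restrict_op_clo_in_Pol:
  assumes "B \<subseteq> A" "\<forall>R\<in>Rs. rel_over B R" "\<forall>f\<in>F. restrict_op B f \<in> Pol B Rs"
    and "f \<in> clo A F"
  shows "restrict_op B f \<in> Pol B Rs"
  using assms(4)
proof (induction rule: clo.induct)
  case (clo_proj k n)
  then show ?case
    using assms(1,2) by (simp add: restrict_op_proj Pol_proj)
next
  case (clo_gen f)
  then show ?case
    using assms(3) by blast
next
  case (clo_comp f gs m)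
  then have "\<forall>g\<in>set gs. fst g = m \<and> restrict_op B g \<in> ops B"
    by (auto simp: Pol_def)
  then have "restrict_op B (compose A m f gs) = compose B m (restrict_op B f) (map (restrict_op B) gs)"
    by (rule restrict_op_compose[OF assms(1) clo_comp.hyps(2)])
  moreover have "compose B m (restrict_op B f) (map (restrict_op B) gs) \<in> Pol B Rs"
    using clo_comp assms(2) by (intro Pol_compose) auto
  ultimately show ?case by simp
qed

text \<open>Over {0, 1}, x - y + z and x + y + z agree mod 2.\<close>

lemma affine_rel_iff:
  "t \<in> snd affine_rel \<longleftrightarrow> (\<exists>x y z. t = [x, y, z, (x + y + z) mod 2] \<and> x \<in> D2 \<and> y \<in> D2 \<and> z \<in> D2)"
  unfolding affine_rel_def by auto

lemma fst_affine_rel [simp]: "fst affine_rel = 4"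
  by (simp add: affine_rel_def)

lemma rel_over_Z2_rels: "\<forall>R\<in>{affine_rel, (1, {[0]}), (1, {[1]})}. rel_over D2 R"
  by (auto simp: rel_over_def affine_rel_iff)

lemma upt_4: "[0..<4] = [0, 1, 2, 3::nat]"
  by (simp add: numeral_eq_Suc upt_Suc)

lemma preserves_singleton_iff: "preserves f (1, {[x]}) \<longleftrightarrow> snd f (replicate (fst f) x) = x"
proof -
  have "length rows = fst f \<and> set rows \<subseteq> {[x]} \<longleftrightarrow> rows = replicate (fst f) [x]" for rows
    by (auto intro: replicate_eqI)
  then show ?thesis
    by (simp add: preserves_def map_replicate_const comp_def)
qed

definition mod2_affine :: "op \<Rightarrow> bool" where
  "mod2_affine f \<longleftrightarrow> (\<forall>a b c. length a = fst f \<and> length b = fst f \<and> length c = fst f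
     \<and> set a \<subseteq> D2 \<and> set b \<subseteq> D2 \<and> set c \<subseteq> D2
     \<longrightarrow> snd f (map (\<lambda>t. (a ! t + b ! t + c ! t) mod 2) [0..<fst f]) = (snd f a + snd f b + snd f c) mod 2)"

lemma mod2_affineD:
  assumes "mod2_affine f" "length a = fst f" "length b = fst f" "length c = fst f"
    "set a \<subseteq> D2" "set b \<subseteq> D2" "set c \<subseteq> D2"
  shows "snd f (map (\<lambda>t. (a ! t + b ! t + c ! t) mod 2) [0..<fst f]) = (snd f a + snd f b + snd f c) mod 2"
  using assms unfolding mod2_affine_def by blast

lemma mod2_affine_if_preserves_affine_rel:
  assumes pres: "preserves f affine_rel"
  shows "mod2_affine f"
  unfolding mod2_affine_def
proof (intro allI impI)
  fix a b c assume abc: "length a = fst f \<and> length b = fst f \<and> length c = fst f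
    \<and> set a \<subseteq> D2 \<and> set b \<subseteq> D2 \<and> set c \<subseteq> D2"
  define s where "s = map (\<lambda>t. (a ! t + b ! t + c ! t) mod 2) [0..<fst f]"
  define rows where "rows = map (\<lambda>t. [a ! t, b ! t, c ! t, s ! t]) [0..<fst f]"
  have "[a ! t, b ! t, c ! t, s ! t] \<in> snd affine_rel" if "t < fst f" for t
  proof -
    have "a ! t \<in> D2" "b ! t \<in> D2" "c ! t \<in> D2"
      using abc that nth_mem by (metis subsetD)+
    then show ?thesis
      using that unfolding affine_rel_iff s_def by simp
  qed
  then have "set rows \<subseteq> snd affine_rel"
    by (auto simp: rows_def)
  moreover have "length rows = fst f"
    by (simp add: rows_def)
  ultimately have "map (\<lambda>j. snd f (map (\<lambda>r. r ! j) rows)) [0..<fst affine_rel] \<in> snd affine_rel"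
    using pres unfolding preserves_def by blast
  moreover have "map (\<lambda>r. r ! 0) rows = a" "map (\<lambda>r. r ! 1) rows = b"
    "map (\<lambda>r. r ! 2) rows = c" "map (\<lambda>r. r ! 3) rows = s"
    using abc map_nth[of a] map_nth[of b] map_nth[of c] map_nth[of s]
    by (simp_all add: rows_def comp_def s_def)
  ultimately have "[snd f a, snd f b, snd f c, snd f s] \<in> snd affine_rel"
    by (simp add: upt_4)
  then show "snd f s = (snd f a + snd f b + snd f c) mod 2"
    by (simp add: affine_rel_iff)
qed

lemma preserves_affine_rel_if_mod2_affine:
  assumes f: "f \<in> ops D2" and aff: "mod2_affine f"
  shows "preserves f affine_rel"
  unfolding preserves_def
proof (intro allI impI)
  fix rows assume rows: "length rows = fst f \<and> set rows \<subseteq> snd affine_rel"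
  define col where "col j = map (\<lambda>r. r ! j) rows" for j
  have col_D2: "set (col j) \<subseteq> D2" if "j < 4" for j
    unfolding col_def using rel_over_Z2_rels rows that by (intro column_subset) auto
  have "col 3 = map (\<lambda>t. (col 0 ! t + col 1 ! t + col 2 ! t) mod 2) [0..<fst f]"
  proof (rule nth_equalityI)
    fix t assume t: "t < length (col 3)"
    then have "rows ! t \<in> snd affine_rel"
      using rows nth_mem[of t rows] by (auto simp: col_def)
    then obtain x y z where "rows ! t = [x, y, z, (x + y + z) mod 2]"
      unfolding affine_rel_iff by blast
    then show "col 3 ! t = map (\<lambda>t. (col 0 ! t + col 1 ! t + col 2 ! t) mod 2) [0..<fst f] ! t"
      using t rows by (simp add: col_def)
  qed (use rows in \<open>simp add: col_def\<close>)
  moreover have "length (col j) = fst f" for j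
    using rows by (simp add: col_def)
  ultimately have "snd f (col 3) = (snd f (col 0) + snd f (col 1) + snd f (col 2)) mod 2"
    using mod2_affineD[OF aff _ _ _ col_D2 col_D2 col_D2] by simp
  moreover have "snd f (col j) \<in> D2" if "j < 4" for j
    using f col_D2[OF that] rows by (intro ops_value) (auto simp: col_def)
  ultimately have "[snd f (col 0), snd f (col 1), snd f (col 2), snd f (col 3)] \<in> snd affine_rel"
    unfolding affine_rel_iff by simp
  then show "map (\<lambda>j. snd f (map (\<lambda>r. r ! j) rows)) [0..<fst affine_rel] \<in> snd affine_rel"
    by (simp add: upt_4 col_def)
qed

lemma mem_Z2_iff:
  "f \<in> Z2 \<longleftrightarrow> f \<in> ops D2 \<and> mod2_affine f \<and> (\<forall>x\<in>D2. snd f (replicate (fst f) x) = x)"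
  unfolding Z2_def Pol_def mem_Collect_eq ball_simps preserves_singleton_iff
  using mod2_affine_if_preserves_affine_rel preserves_affine_rel_if_mod2_affine by blast

definition parity_op :: "nat \<Rightarrow> nat set \<Rightarrow> op" where
  "parity_op n S = mk_op D2 n (\<lambda>xs. (\<Sum>j\<in>S. xs ! j) mod 2)"

lemma fst_parity_op [simp]: "fst (parity_op n S) = n"
  by (simp add: parity_op_def)

lemma parity_op_in_Z2:
  assumes S: "S \<subseteq> {..<n}" "odd (card S)"
  shows "parity_op n S \<in> Z2"
  unfolding mem_Z2_iff
proof (intro conjI ballI)
  show "parity_op n S \<in> ops D2"
    unfolding parity_op_def by (intro mk_op_in_ops) auto
next
  show "mod2_affine (parity_op n S)"
    unfolding mod2_affine_def
  proof (intro allI impI)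
    fix a b c assume abc: "length a = fst (parity_op n S) \<and> length b = fst (parity_op n S)
      \<and> length c = fst (parity_op n S) \<and> set a \<subseteq> D2 \<and> set b \<subseteq> D2 \<and> set c \<subseteq> D2"
    have "(\<Sum>j\<in>S. map (\<lambda>t. (a ! t + b ! t + c ! t) mod 2) [0..<n] ! j) mod 2
        = (\<Sum>j\<in>S. (a ! j + b ! j + c ! j) mod 2) mod 2"
      using S(1) by (intro arg_cong[where f = "\<lambda>s. s mod 2"] sum.cong) auto
    also have "\<dots> = ((\<Sum>j\<in>S. a ! j) + (\<Sum>j\<in>S. b ! j) + (\<Sum>j\<in>S. c ! j)) mod 2"
      by (simp add: mod_sum_eq sum.distrib)
    also have "\<dots> = ((\<Sum>j\<in>S. a ! j) mod 2 + (\<Sum>j\<in>S. b ! j) mod 2 + (\<Sum>j\<in>S. c ! j) mod 2) mod 2"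
      by (metis mod_add_eq mod_add_left_eq)
    moreover have "set (map (\<lambda>t. (a ! t + b ! t + c ! t) mod 2) [0..<n]) \<subseteq> D2"
      by auto
    ultimately show "snd (parity_op n S) (map (\<lambda>t. (a ! t + b ! t + c ! t) mod 2) [0..<fst (parity_op n S)])
        = (snd (parity_op n S) a + snd (parity_op n S) b + snd (parity_op n S) c) mod 2"
      using abc by (simp add: parity_op_def snd_mk_op)
  qed
next
  fix x :: nat assume x: "x \<in> D2"
  then have "snd (parity_op n S) (replicate n x) = (\<Sum>j\<in>S. replicate n x ! j) mod 2"
    unfolding parity_op_def by (intro snd_mk_op) auto
  also have "(\<Sum>j\<in>S. replicate n x ! j) = card S * x"
    using S(1) by (simp add: subset_eq)
  finally show "snd (parity_op n S) (replicate (fst (parity_op n S)) x) = x"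
    using S(2) x by (auto simp: odd_iff_mod_2_eq_one)
qed

definition d_fun :: "nat \<Rightarrow> nat \<Rightarrow> nat \<Rightarrow> nat \<Rightarrow> nat" where
  "d_fun i x y z = (if x = y then z else if y = z then x else if x = z then y else i)"

lemma d_eq_mk_op: "d i = mk_op D3 3 (\<lambda>xs. d_fun i (xs ! 0) (xs ! 1) (xs ! 2))"
  unfolding d_def d_fun_def by (rule mk_op_cong) (auto simp: Let_def card_insert_if)

lemma snd_d: "x \<in> D3 \<Longrightarrow> y \<in> D3 \<Longrightarrow> z \<in> D3 \<Longrightarrow> snd (d i) [x, y, z] = d_fun i x y z"
  by (simp add: d_eq_mk_op snd_mk_op)

lemma length_3_cases: "length xs = 3 \<Longrightarrow> \<exists>x y z. xs = [x, y, z]"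
  by (auto simp: numeral_3_eq_3 length_Suc_conv)

lemma d_fun_in: "d_fun i x y z \<in> {i, x, y, z}"
  by (simp add: d_fun_def)

lemma d_in_ops:
  assumes "i \<in> D3"
  shows "d i \<in> ops D3"
  unfolding d_eq_mk_op
proof (rule mk_op_in_ops)
  fix xs :: "nat list" assume "length xs = 3" "set xs \<subseteq> D3"
  moreover obtain x y z where xs: "xs = [x, y, z]"
    using length_3_cases \<open>length xs = 3\<close> by blast
  ultimately have "{i, x, y, z} \<subseteq> D3"
    using assms by simp
  then have "d_fun i x y z \<in> D3"
    using d_fun_in by blast
  then show "d_fun i (xs ! 0) (xs ! 1) (xs ! 2) \<in> D3"
    using xs by simp
qed

lemma restrict_d_in_Z2: "restrict_op D2 (d i) \<in> Z2"
proof -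
  have "restrict_op D2 (d i) = parity_op 3 {0, 1, 2}"
    unfolding restrict_op_def parity_op_def fst_d
  proof (rule mk_op_cong)
    fix xs :: "nat list" assume "length xs = 3" "set xs \<subseteq> D2"
    moreover obtain x y z where "xs = [x, y, z]"
      using length_3_cases \<open>length xs = 3\<close> by blast
    ultimately show "snd (d i) xs = (\<Sum>j\<in>{0, 1, 2}. xs ! j) mod 2"
      by (auto simp: snd_d d_fun_def)
  qed
  then show ?thesis
    by (simp add: parity_op_in_Z2)
qed

section \<open>The support of an operation in Z2\<close>

lemma odd_card_preimage:
  assumes "finite S"
  shows "odd (card {j\<in>S. P (\<sigma> j)}) \<longleftrightarrow> odd (card {k. odd (card {j\<in>S. \<sigma> j = k}) \<and> P k})"
proof -
  define K where "K = {k\<in>\<sigma> ` S. P k}"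
  have "finite K"
    using assms by (simp add: K_def)
  have "card {j\<in>S. P (\<sigma> j)} = (\<Sum>k\<in>K. card {j. j \<in> {j\<in>S. P (\<sigma> j)} \<and> \<sigma> j = k})"
    using sum.group[of "{j\<in>S. P (\<sigma> j)}" K \<sigma> "\<lambda>_. 1::nat"] assms \<open>finite K\<close>
    by (simp add: K_def image_subset_iff)
  also have "\<dots> = (\<Sum>k\<in>K. card {j\<in>S. \<sigma> j = k})"
  proof (rule sum.cong)
    fix k assume "k \<in> K"
    then have "{j. j \<in> {j\<in>S. P (\<sigma> j)} \<and> \<sigma> j = k} = {j\<in>S. \<sigma> j = k}"
      by (auto simp: K_def)
    then show "card {j. j \<in> {j\<in>S. P (\<sigma> j)} \<and> \<sigma> j = k} = card {j\<in>S. \<sigma> j = k}"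
      by simp
  qed simp
  finally have "even (card {j\<in>S. P (\<sigma> j)}) \<longleftrightarrow> even (card {k\<in>K. odd (card {j\<in>S. \<sigma> j = k})})"
    using even_sum_iff[OF \<open>finite K\<close>] by simp
  moreover have "k \<in> \<sigma> ` S" if "odd (card {j\<in>S. \<sigma> j = k})" for k
  proof -
    have "{j\<in>S. \<sigma> j = k} \<noteq> {}"
      using that by (intro notI) simp
    then show ?thesis
      by blast
  qed
  then have "{k\<in>K. odd (card {j\<in>S. \<sigma> j = k})} = {k. odd (card {j\<in>S. \<sigma> j = k}) \<and> P k}"
    by (auto simp: K_def)
  ultimately show ?thesis
    by simp
qed

definition indicator_vec :: "nat \<Rightarrow> nat set \<Rightarrow> nat list" where
  "indicator_vec n T = map (\<lambda>t. if t \<in> T then 1 else 0) [0..<n]"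

lemma length_indicator_vec [simp]: "length (indicator_vec n T) = n"
  by (simp add: indicator_vec_def)

lemma set_indicator_vec: "set (indicator_vec n T) \<subseteq> D2"
  by (auto simp: indicator_vec_def)

lemma nth_indicator_vec: "t < n \<Longrightarrow> indicator_vec n T ! t = (if t \<in> T then 1 else 0)"
  by (simp add: indicator_vec_def)

lemma indicator_vec_empty: "indicator_vec n {} = replicate n 0"
  by (simp add: indicator_vec_def map_replicate_const)

definition Z2_support :: "op \<Rightarrow> nat set" where
  "Z2_support f = {j. j < fst f \<and> snd f (indicator_vec (fst f) {j}) = 1}"

lemma Z2_support_subset: "Z2_support f \<subseteq> {..<fst f}"
  by (auto simp: Z2_support_def)

lemma finite_Z2_support: "finite (Z2_support f)"
  using Z2_support_subset finite_subset by blast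

lemma indicator_vec_insert:
  assumes "j \<notin> T"
  shows "indicator_vec n (insert j T)
           = map (\<lambda>t. (indicator_vec n T ! t + indicator_vec n {} ! t + indicator_vec n {j} ! t) mod 2) [0..<n]"
  using assms by (auto simp: list_eq_iff_nth_eq nth_indicator_vec)

lemma Z2_unit_vec:
  assumes f: "f \<in> Z2" and j: "j < fst f"
  shows "snd f (indicator_vec (fst f) {j}) = (if j \<in> Z2_support f then 1 else 0)"
proof -
  have "snd f (indicator_vec (fst f) {j}) \<in> D2"
    using f ops_value[OF _ _ set_indicator_vec] by (simp add: mem_Z2_iff)
  then show ?thesis
    using j by (auto simp: Z2_support_def)
qed

lemma Z2_indicator_vec:
  assumes f: "f \<in> Z2" and T: "T \<subseteq> {..<fst f}"
  shows "snd f (indicator_vec (fst f) T) = card (Z2_support f \<inter> T) mod 2"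
proof -
  have "finite T"
    using T finite_subset by blast
  then show ?thesis
    using T
  proof (induction T rule: finite_induct)
    case empty
    then show ?case
      using f by (simp add: indicator_vec_empty mem_Z2_iff)
  next
    case (insert j T)
    have "snd f (indicator_vec (fst f) (insert j T))
        = (snd f (indicator_vec (fst f) T) + snd f (indicator_vec (fst f) {})
           + snd f (indicator_vec (fst f) {j})) mod 2"
      unfolding indicator_vec_insert[OF insert.hyps(2)]
      using mod2_affineD[OF _ _ _ _ set_indicator_vec set_indicator_vec set_indicator_vec] f
      by (simp add: mem_Z2_iff)
    also have "\<dots> = (card (Z2_support f \<inter> T) mod 2 + 0 + (if j \<in> Z2_support f then 1 else 0)) mod 2"
      using insert f by (simp add: indicator_vec_empty mem_Z2_iff Z2_unit_vec)
    also have "\<dots> = (card (Z2_support f \<inter> T) + (if j \<in> Z2_support f then 1 else 0)) mod 2"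
      by (simp only: add_0_right mod_add_left_eq)
    also have "card (Z2_support f \<inter> T) + (if j \<in> Z2_support f then 1 else 0) = card (Z2_support f \<inter> insert j T)"
      using insert.hyps by (simp add: Int_insert_right)
    finally show ?case .
  qed
qed

lemma odd_card_Z2_support:
  assumes "f \<in> Z2"
  shows "odd (card (Z2_support f))"
proof -
  have "indicator_vec (fst f) {..<fst f} = replicate (fst f) 1"
    by (simp add: indicator_vec_def list_eq_iff_nth_eq)
  then have "card (Z2_support f \<inter> {..<fst f}) mod 2 = 1"
    using Z2_indicator_vec[OF assms, of "{..<fst f}"] assms by (simp add: mem_Z2_iff)
  then show ?thesis
    using Z2_support_subset by (simp add: Int_absorb2 odd_iff_mod_2_eq_one)
qed

lemma Z2_support_minor:
  assumes f: "f \<in> Z2" and \<sigma>: "\<forall>j<fst f. \<sigma> j < r"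
  shows "Z2_support (minor D2 f r \<sigma>) = {k. odd (card {j\<in>Z2_support f. \<sigma> j = k})}"
proof -
  have "snd (minor D2 f r \<sigma>) (indicator_vec r {k}) = 1 \<longleftrightarrow> odd (card {j\<in>Z2_support f. \<sigma> j = k})"
    if "k < r" for k
  proof -
    have "map (\<lambda>j. indicator_vec r {k} ! \<sigma> j) [0..<fst f] = indicator_vec (fst f) {j. j < fst f \<and> \<sigma> j = k}"
      using \<sigma> by (auto simp: list_eq_iff_nth_eq nth_indicator_vec)
    then have "snd (minor D2 f r \<sigma>) (indicator_vec r {k}) = snd f (indicator_vec (fst f) {j. j < fst f \<and> \<sigma> j = k})"
      using snd_mk_op[OF length_indicator_vec set_indicator_vec] by (simp add: minor_def)
    also have "\<dots> = card (Z2_support f \<inter> {j. j < fst f \<and> \<sigma> j = k}) mod 2"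
      by (rule Z2_indicator_vec[OF f]) auto
    finally have "snd (minor D2 f r \<sigma>) (indicator_vec r {k}) = card (Z2_support f \<inter> {j. j < fst f \<and> \<sigma> j = k}) mod 2" .
    moreover have "Z2_support f \<inter> {j. j < fst f \<and> \<sigma> j = k} = {j\<in>Z2_support f. \<sigma> j = k}"
      using Z2_support_subset by blast
    ultimately show ?thesis
      by (simp add: odd_iff_mod_2_eq_one)
  qed
  moreover have "k < r" if "odd (card {j\<in>Z2_support f. \<sigma> j = k})" for k
  proof -
    have "{j\<in>Z2_support f. \<sigma> j = k} \<noteq> {}"
      using that by (intro notI) simp
    then obtain j where "j \<in> Z2_support f" "\<sigma> j = k"
      by blast
    then show ?thesis
      using \<sigma> Z2_support_subset by blast
  qed
  ultimately show ?thesis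
    unfolding Z2_support_def[of "minor D2 f r \<sigma>"] fst_minor by auto
qed

section \<open>Parity votes in Clo(d_i)\<close>

definition parity_vote :: "nat \<Rightarrow> (nat \<Rightarrow> bool) \<Rightarrow> nat" where
  "parity_vote i p =
     (if p 0 \<and> \<not> p 1 \<and> \<not> p 2 then 0
      else if \<not> p 0 \<and> p 1 \<and> \<not> p 2 then 1
      else if \<not> p 0 \<and> \<not> p 1 \<and> p 2 then 2 else i)"

text \<open>For distinct i, y in {0, 1, 2}, 3 - i - y is the third element.\<close>

definition swap_except :: "nat \<Rightarrow> nat \<Rightarrow> nat" where
  "swap_except i y = (if y = i then y else 3 - i - y)"

definition twist :: "nat \<Rightarrow> (nat \<Rightarrow> bool) \<Rightarrow> nat \<Rightarrow> nat" where
  "twist i p y = (if p 0 \<and> p 1 \<and> p 2 then swap_except i y else y)"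

text \<open>
  Appending a, b to a list flips the parities of a and b. Applying d_i to the old vote and to a, b
  themselves gives the new vote except when all parities were odd and i is one of a, b; the twist
  repairs this case without spoiling the others.
\<close>

lemma parity_vote_flip_pair:
  assumes "p 0 = (p 1 = p 2)" and "i \<in> D3" "a \<in> D3" "b \<in> D3"
  shows "parity_vote i (\<lambda>v. p v \<noteq> odd (count_list [a, b] v))
           = d_fun i (parity_vote i p) (twist i p a) (twist i p b)"
  using assms(2-) assms(1)
  by (elim insertE emptyE) (simp_all add: parity_vote_def twist_def swap_except_def d_fun_def)

lemma twist_flip_pair:
  assumes "p 0 = (p 1 = p 2)" and "i \<in> D3" "a \<in> D3" "b \<in> D3" "y \<in> D3"
  shows "twist i (\<lambda>v. p v \<noteq> odd (count_list [a, b] v)) y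
           = d_fun i (d_fun i (parity_vote i p) (twist i p a) y)
                     (d_fun i (parity_vote i p) (twist i p b) y)
                     (d_fun i (twist i p a) (twist i p b) (twist i p y))"
  using assms(2-) assms(1)
  by (elim insertE emptyE) (simp_all add: parity_vote_def twist_def swap_except_def d_fun_def)

definition vote_fun :: "nat \<Rightarrow> nat list \<Rightarrow> nat" where
  "vote_fun i ys = parity_vote i (\<lambda>v. odd (count_list ys v))"

definition twist_fun :: "nat \<Rightarrow> nat list \<Rightarrow> nat" where
  "twist_fun i zs = twist i (\<lambda>v. odd (count_list (butlast zs) v)) (last zs)"

lemma odd_count_list_parity:
  assumes "set ys \<subseteq> D3" "odd (length ys)"
  shows "odd (count_list ys 0) = (odd (count_list ys 1) = odd (count_list ys 2))"
proof -
  have "count_list ys 0 + count_list ys 1 + count_list ys 2 = length ys"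
    using sum_count_set[OF assms(1)] by (simp add: add.assoc)
  then have "odd (count_list ys 0 + count_list ys 1 + count_list ys 2)"
    using assms(2) by simp
  then show ?thesis
    by auto
qed

lemma vote_fun_append_pair:
  assumes "i \<in> D3" "set ys \<subseteq> D3" "odd (length ys)" "a \<in> D3" "b \<in> D3"
  shows "vote_fun i (ys @ [a, b]) = d_fun i (vote_fun i ys) (twist_fun i (ys @ [a])) (twist_fun i (ys @ [b]))"
  using parity_vote_flip_pair[OF odd_count_list_parity[OF assms(2,3)] assms(1,4,5)]
  by (simp add: vote_fun_def twist_fun_def)

lemma twist_fun_append_pair:
  assumes "i \<in> D3" "set ys \<subseteq> D3" "odd (length ys)" "a \<in> D3" "b \<in> D3" "y \<in> D3"
  shows "twist_fun i (ys @ [a, b, y])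
           = d_fun i (d_fun i (vote_fun i ys) (twist_fun i (ys @ [a])) y)
                     (d_fun i (vote_fun i ys) (twist_fun i (ys @ [b])) y)
                     (d_fun i (twist_fun i (ys @ [a])) (twist_fun i (ys @ [b])) (twist_fun i (ys @ [y])))"
proof -
  have "butlast (ys @ [a, b, y]) = ys @ [a, b]"
    by (simp add: butlast_append)
  then show ?thesis
    using twist_flip_pair[OF odd_count_list_parity[OF assms(2,3)] assms(1,4,5,6)]
    by (simp add: vote_fun_def twist_fun_def)
qed

lemma clo_mk_op_d:
  assumes i: "i \<in> D3" and G: "mk_op D3 m G1 \<in> clo D3 {d i}" "mk_op D3 m G2 \<in> clo D3 {d i}"
    "mk_op D3 m G3 \<in> clo D3 {d i}"
  shows "mk_op D3 m (\<lambda>xs. d_fun i (G1 xs) (G2 xs) (G3 xs)) \<in> clo D3 {d i}"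
proof -
  have clo_value: "G xs \<in> D3" if "mk_op D3 m G \<in> clo D3 {d i}" "length xs = m" "set xs \<subseteq> D3" for G xs
  proof -
    have "mk_op D3 m G \<in> ops D3"
      using clo_subset_ops[of "{d i}" D3] d_in_ops[OF i] that(1) by auto
    then show ?thesis
      using ops_value[of "mk_op D3 m G" D3 xs] that by (simp add: snd_mk_op)
  qed
  have "mk_op D3 m (\<lambda>xs. snd (d i) (map (\<lambda>G. G xs) [G1, G2, G3])) \<in> clo D3 {d i}"
    using G by (intro clo_mk_op_compose) (auto intro: clo_gen)
  moreover have "mk_op D3 m (\<lambda>xs. snd (d i) (map (\<lambda>G. G xs) [G1, G2, G3]))
               = mk_op D3 m (\<lambda>xs. d_fun i (G1 xs) (G2 xs) (G3 xs))"
    using clo_value G by (intro mk_op_cong) (simp add: snd_d)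
  ultimately show ?thesis
    by simp
qed

lemma map_nth_upt: "k \<le> length xs \<Longrightarrow> map ((!) xs) [0..<k] = take k xs"
  by (simp add: list_eq_iff_nth_eq)

lemma take_append_nths: "length xs = k + n \<Longrightarrow> xs = take k xs @ map ((!) xs) [k..<k + n]"
  by (simp add: list_eq_iff_nth_eq nth_append)

lemma mk_op_vote_fun_step:
  assumes i: "i \<in> D3" and k: "odd k"
  shows "mk_op D3 (k + 2) (vote_fun i) = mk_op D3 (k + 2) (\<lambda>xs. d_fun i
           (vote_fun i (map ((!) xs) [0..<k]))
           (twist_fun i (map ((!) xs) ([0..<k] @ [k])))
           (twist_fun i (map ((!) xs) ([0..<k] @ [k + 1]))))"
proof (rule mk_op_cong)
  fix xs assume xs: "length xs = k + 2" "set xs \<subseteq> D3"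
  then have "xs = take k xs @ [xs ! k, xs ! (k + 1)]"
    using take_append_nths[of xs k 2] by (simp add: numeral_2_eq_2)
  moreover have "set (take k xs) \<subseteq> D3" "xs ! k \<in> D3" "xs ! (k + 1) \<in> D3"
    using xs set_take_subset[of k xs] nth_mem_subset[OF xs(2)] by auto
  ultimately show "vote_fun i xs = d_fun i (vote_fun i (map ((!) xs) [0..<k]))
        (twist_fun i (map ((!) xs) ([0..<k] @ [k])))
        (twist_fun i (map ((!) xs) ([0..<k] @ [k + 1])))"
    using vote_fun_append_pair[OF i, of "take k xs" "xs ! k" "xs ! (k + 1)"] xs k
    by (simp add: map_nth_upt)
qed

lemma mk_op_twist_fun_step:
  assumes i: "i \<in> D3" and k: "odd k"
  shows "mk_op D3 (k + 3) (twist_fun i) = mk_op D3 (k + 3) (\<lambda>xs. d_fun i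
           (d_fun i (vote_fun i (map ((!) xs) [0..<k])) (twist_fun i (map ((!) xs) ([0..<k] @ [k]))) (xs ! (k + 2)))
           (d_fun i (vote_fun i (map ((!) xs) [0..<k])) (twist_fun i (map ((!) xs) ([0..<k] @ [k + 1]))) (xs ! (k + 2)))
           (d_fun i (twist_fun i (map ((!) xs) ([0..<k] @ [k]))) (twist_fun i (map ((!) xs) ([0..<k] @ [k + 1])))
                    (twist_fun i (map ((!) xs) ([0..<k] @ [k + 2])))))"
proof (rule mk_op_cong)
  fix xs assume xs: "length xs = k + 3" "set xs \<subseteq> D3"
  then have "xs = take k xs @ [xs ! k, xs ! (k + 1), xs ! (k + 2)]"
    using take_append_nths[of xs k 3] by (simp add: numeral_3_eq_3)
  moreover have "set (take k xs) \<subseteq> D3" "xs ! k \<in> D3" "xs ! (k + 1) \<in> D3" "xs ! (k + 2) \<in> D3"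
    using xs set_take_subset[of k xs] nth_mem_subset[OF xs(2)] by auto
  ultimately show "twist_fun i xs = d_fun i
        (d_fun i (vote_fun i (map ((!) xs) [0..<k])) (twist_fun i (map ((!) xs) ([0..<k] @ [k]))) (xs ! (k + 2)))
        (d_fun i (vote_fun i (map ((!) xs) [0..<k])) (twist_fun i (map ((!) xs) ([0..<k] @ [k + 1]))) (xs ! (k + 2)))
        (d_fun i (twist_fun i (map ((!) xs) ([0..<k] @ [k]))) (twist_fun i (map ((!) xs) ([0..<k] @ [k + 1])))
                 (twist_fun i (map ((!) xs) ([0..<k] @ [k + 2]))))"
    using twist_fun_append_pair[OF i, of "take k xs" "xs ! k" "xs ! (k + 1)" "xs ! (k + 2)"] xs k
    by (simp add: map_nth_upt)
qed

lemma vote_twist_in_clo: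
  assumes i: "i \<in> D3"
  shows "mk_op D3 (2 * q + 1) (vote_fun i) \<in> clo D3 {d i} \<and> mk_op D3 (2 * q + 2) (twist_fun i) \<in> clo D3 {d i}"
proof (induction q)
  case 0
  have "mk_op D3 1 (vote_fun i) = proj D3 1 0"
    unfolding proj_def by (rule mk_op_cong) (auto simp: vote_fun_def parity_vote_def length_Suc_conv)
  moreover have "mk_op D3 2 (twist_fun i) = proj D3 2 1"
    unfolding proj_def by (rule mk_op_cong) (auto simp: twist_fun_def twist_def numeral_2_eq_2 length_Suc_conv)
  ultimately have "mk_op D3 1 (vote_fun i) \<in> clo D3 {d i} \<and> mk_op D3 2 (twist_fun i) \<in> clo D3 {d i}"
    by (simp add: clo_proj)
  then show ?case
    by (simp only: mult_0_right add_0_left)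
next
  case (Suc q)
  define k where "k = 2 * q + 1"
  have k: "odd k" "2 * Suc q + 1 = k + 2" "2 * Suc q + 2 = k + 3"
    by (simp_all add: k_def)
  have proj_in: "mk_op D3 m (\<lambda>xs. xs ! j) \<in> clo D3 {d i}" if "j < m" for m j
    using clo_proj[OF that] by (simp add: proj_def)
  have vote_in: "mk_op D3 m (\<lambda>xs. vote_fun i (map ((!) xs) [0..<k])) \<in> clo D3 {d i}" if "k \<le> m" for m
    using Suc.IH that by (intro clo_mk_op_reindex[where k = k]) (auto simp: k_def)
  have twist_in: "mk_op D3 m (\<lambda>xs. twist_fun i (map ((!) xs) ([0..<k] @ [j]))) \<in> clo D3 {d i}"
    if "k \<le> j" "j < m" for m j
    using Suc.IH that by (intro clo_mk_op_reindex[where k = "Suc k"]) (auto simp: k_def)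
  have "mk_op D3 (k + 2) (vote_fun i) \<in> clo D3 {d i}"
    unfolding mk_op_vote_fun_step[OF i k(1)] by (intro clo_mk_op_d[OF i] vote_in twist_in) simp_all
  moreover have "mk_op D3 (k + 3) (twist_fun i) \<in> clo D3 {d i}"
    unfolding mk_op_twist_fun_step[OF i k(1)] by (intro clo_mk_op_d[OF i] vote_in twist_in proj_in) simp_all
  ultimately show ?case
    unfolding k(2,3) by blast
qed

section \<open>The minion homomorphisms\<close>

definition vote_op :: "nat \<Rightarrow> op \<Rightarrow> op" where
  "vote_op i f = mk_op D3 (fst f) (\<lambda>xs. parity_vote i (\<lambda>v. odd (card {j\<in>Z2_support f. xs ! j = v})))"

lemma fst_vote_op [simp]: "fst (vote_op i f) = fst f"
  by (simp add: vote_op_def)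

lemma count_list_map_distinct:
  assumes "distinct js"
  shows "count_list (map g js) v = card {j\<in>set js. g j = v}"
proof -
  have "count_list (map g js) v = length (filter (\<lambda>j. g j = v) js)"
    by (induction js) auto
  also have "\<dots> = card ({j. g j = v} \<inter> set js)"
    using assms by (rule distinct_length_filter)
  also have "{j. g j = v} \<inter> set js = {j\<in>set js. g j = v}"
    by blast
  finally show ?thesis .
qed

lemma vote_op_in_clo:
  assumes f: "f \<in> Z2" and i: "i \<in> D3"
  shows "vote_op i f \<in> clo D3 {d i}"
proof -
  define js where "js = sorted_list_of_set (Z2_support f)"
  have js: "distinct js" "set js = Z2_support f" "length js = card (Z2_support f)"
    using finite_Z2_support by (simp_all add: js_def)
  have js_less: "\<forall>j\<in>set js. j < fst f"
    using js(2) Z2_support_subset by blast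
  obtain q where "card (Z2_support f) = 2 * q + 1"
    using odd_card_Z2_support[OF f] oddE by blast
  then have "mk_op D3 (fst f) (\<lambda>xs. vote_fun i (map ((!) xs) js)) \<in> clo D3 {d i}"
    using vote_twist_in_clo[OF i, of q] js js_less
    by (intro clo_mk_op_reindex[where k = "card (Z2_support f)"]) auto
  moreover have "vote_op i f = mk_op D3 (fst f) (\<lambda>xs. vote_fun i (map ((!) xs) js))"
    unfolding vote_op_def vote_fun_def using js by (simp add: count_list_map_distinct)
  ultimately show ?thesis
    by simp
qed

lemma vote_op_minor:
  assumes f: "f \<in> Z2" and \<sigma>: "\<forall>j<fst f. \<sigma> j < r"
  shows "vote_op i (minor D2 f r \<sigma>) = minor D3 (vote_op i f) r \<sigma>"
  unfolding minor_def[of D3] vote_op_def[of i "minor D2 f r \<sigma>"] fst_minor fst_vote_op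
proof (rule mk_op_cong)
  fix xs :: "nat list" assume xs: "length xs = r" "set xs \<subseteq> D3"
  have "xs ! \<sigma> j \<in> D3" if "j < fst f" for j
    using nth_mem_subset[OF xs(2)] xs(1) \<sigma> that by simp
  then have "set (map (\<lambda>j. xs ! \<sigma> j) [0..<fst f]) \<subseteq> D3"
    by (simp add: image_subset_iff del: insert_iff)
  moreover have "{j\<in>Z2_support f. map (\<lambda>j. xs ! \<sigma> j) [0..<fst f] ! j = v} = {j\<in>Z2_support f. xs ! \<sigma> j = v}"
    for v using Z2_support_subset[of f] by auto
  moreover have "odd (card {k\<in>Z2_support (minor D2 f r \<sigma>). xs ! k = v}) \<longleftrightarrow> odd (card {j\<in>Z2_support f. xs ! \<sigma> j = v})"
    for v unfolding Z2_support_minor[OF f \<sigma>]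
    using odd_card_preimage[OF finite_Z2_support, where P = "\<lambda>k. xs ! k = v" and \<sigma> = \<sigma>] by simp
  ultimately show "parity_vote i (\<lambda>v. odd (card {k\<in>Z2_support (minor D2 f r \<sigma>). xs ! k = v}))
      = snd (vote_op i f) (map (\<lambda>j. xs ! \<sigma> j) [0..<fst f])"
    by (simp add: vote_op_def snd_mk_op)
qed

theorem lemma7p1:
  fixes i :: nat
  assumes "i \<in> {0, 1, 2}"
  shows "minion_equiv {0, 1} Z2 {0, 1, 2} (clo {0, 1, 2} {d i})"
proof -
  have "minion_hom D2 Z2 D3 (clo D3 {d i}) (vote_op i)"
    unfolding minion_hom_def using vote_op_in_clo[OF _ assms] vote_op_minor by auto
  moreover have "restrict_op D2 f \<in> Z2" if "f \<in> clo D3 {d i}" for f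
    using restrict_d_in_Z2 rel_over_Z2_rels that unfolding Z2_def
    by (intro restrict_op_clo_in_Pol[where A = D3]) auto
  then have "minion_hom D3 (clo D3 {d i}) D2 Z2 (restrict_op D2)"
    by (simp add: minion_hom_def restrict_op_minor)
  ultimately show ?thesis
    unfolding minion_equiv_def by blast
qed

end
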